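(* Let $\bar A$ be a real $m\times n$ matrix with $\|\bar A\|\le1$, let $0<\sigma^2\le1$, and let $A$ be obtained from $\bar A$ by adding independent $N(0,\sigma^2)$ random variables to each entry. Then \[ \mathbb E[\log(\|A\|+3)]\le\log\big((\sqrt n+\sqrt m)\sigma+4\big). \]
   Context: $\|\cdot\|$ denotes the spectral norm (largest singular value). *)

theory Defs
  imports "HOL-Probability.Probability"
begin

definition spectral_norm :: "real^'n^'m \<Rightarrow> real" where
  "spectral_norm A = onorm (\<lambda>x. A *v x)"

text \<open>Law of the noise: independent N(0, s^2) entries, indexed by (row, column);
  s is the standard deviation.\<close>
definition gaussian_noise :: "real \<Rightarrow> ('m::finite \<times> 'n::finite \<Rightarrow> real) measure" where
  "gaussian_noise s = PiM UNIV (\<lambda>_. density lborel (normal_density 0 s))"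

definition to_matrix :: "('m \<times> 'n \<Rightarrow> real) \<Rightarrow> real^'n^'m" where
  "to_matrix g = (\<chi> i j. g (i, j))"

end

theory Submission
  imports Defs "HOL-Real_Asymp.Real_Asymp"
begin

text \<open>
  Since \<open>\<parallel>Abar\<parallel> \<le> 1\<close>, \<open>ln (\<parallel>Abar + G\<parallel> + 3) \<le> ln (\<parallel>G\<parallel> + 4)\<close> for the Gaussian noise matrix \<open>G\<close>,
  and by concavity of \<open>ln\<close> (Jensen, via a tangent line) the claim follows from Gordon's bound
  \<open>E \<parallel>G\<parallel> \<le> \<sigma> (\<surd>n + \<surd>m)\<close>.

  For Gordon's bound, \<open>\<parallel>G\<parallel>\<close> is, up to a factor \<open>1 - 2e\<close>, the maximum of \<open>\<langle>v, G u\<rangle>\<close> over finite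
  \<open>e\<close>-nets of the unit spheres. This Gaussian process is compared with \<open>\<langle>g, u\<rangle> + \<langle>h, v\<rangle>\<close> for
  independent standard Gaussian vectors \<open>g, h\<close> (scaled by \<open>\<sigma>\<close>), whose increments are larger:
  a Gaussian interpolation argument based on Stein's lemma shows that the expected smooth maximum
  \<open>b\<^sup>-\<^sup>1 ln \<Sum> exp (b X)\<close> of the first process is at most that of the second, which is at most
  \<open>b\<^sup>-\<^sup>1 ln |K| + \<sigma> (\<surd>n + \<surd>m)\<close>. Letting \<open>b \<rightarrow> \<infinity>\<close> and then \<open>e \<rightarrow> 0\<close> gives the bound.
\<close>

section \<open>Gaussian integration by parts\<close>

abbreviation normal_measure :: "real \<Rightarrow> real measure" where
  "normal_measure s \<equiv> density lborel (normal_density 0 s)"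

abbreviation gaussian_product :: "real \<Rightarrow> ('d::finite \<Rightarrow> real) measure" where
  "gaussian_product s \<equiv> PiM UNIV (\<lambda>_. normal_measure s)"

lemma normal_density_has_real_derivative:
  assumes "0 < s"
  shows "(normal_density 0 s has_real_derivative (- x / s\<^sup>2 * normal_density 0 s x)) (at x)"
  unfolding normal_density_def
  using assms by (auto intro!: derivative_eq_intros simp: field_simps power2_eq_square)

lemma tendsto_normal_density_0:
  assumes "0 < s"
  shows "(normal_density 0 s \<longlongrightarrow> 0) at_top" and "(normal_density 0 s \<longlongrightarrow> 0) at_bot"
  unfolding normal_density_def using assms by real_asymp+

lemma tendsto_bounded_mult_normal_density_0:
  fixes g :: "real \<Rightarrow> real"
  assumes s: "0 < s" and bound: "\<And>x. \<bar>g x\<bar> \<le> B"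
  shows "((\<lambda>x. g x * normal_density 0 s x) \<longlongrightarrow> 0) at_top"
    and "((\<lambda>x. g x * normal_density 0 s x) \<longlongrightarrow> 0) at_bot"
proof -
  have "((\<lambda>x. g x * normal_density 0 s x) \<longlongrightarrow> 0) F" if "(normal_density 0 s \<longlongrightarrow> 0) F" for F
  proof (rule Lim_null_comparison)
    show "\<forall>\<^sub>F x in F. norm (g x * normal_density 0 s x) \<le> B * normal_density 0 s x"
      using bound by (intro always_eventually allI) (simp add: abs_mult mult_right_mono)
    show "((\<lambda>x. B * normal_density 0 s x) \<longlongrightarrow> 0) F"
      using tendsto_mult_right_zero[OF that] .
  qed
  then show "((\<lambda>x. g x * normal_density 0 s x) \<longlongrightarrow> 0) at_top"
    and "((\<lambda>x. g x * normal_density 0 s x) \<longlongrightarrow> 0) at_bot"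
    using tendsto_normal_density_0[OF s] by auto
qed

lemma integral_lborel_derivative_eq_0:
  fixes F f :: "real \<Rightarrow> real"
  assumes deriv: "\<And>x. (F has_real_derivative f x) (at x)" and cont: "\<And>x. isCont f x"
    and int: "integrable lborel f"
    and lim: "(F \<longlongrightarrow> 0) at_top" "(F \<longlongrightarrow> 0) at_bot"
  shows "(\<integral>x. f x \<partial>lborel) = 0"
proof -
  have "(LBINT x=-\<infinity>..\<infinity>. f x) = 0 - 0"
  proof (rule interval_integral_FTC_integrable[where F=F])
    show "(F has_vector_derivative f x) (at x)" for x
      using deriv by (simp add: has_real_derivative_iff_has_vector_derivative)
    show "set_integrable lborel (einterval (- \<infinity>) \<infinity>) f"
      unfolding set_integrable_def using int by simp
    show "((F \<circ> real_of_ereal) \<longlongrightarrow> 0) (at_right (- \<infinity>))"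
      "((F \<circ> real_of_ereal) \<longlongrightarrow> 0) (at_left \<infinity>)"
      unfolding ereal_tendsto_simps1 by (fact lim)+
  qed (use cont in auto)
  then show ?thesis
    by (simp add: interval_lebesgue_integral_def set_lebesgue_integral_def)
qed

lemma prob_space_normal_measure: "0 < s \<Longrightarrow> prob_space (normal_measure s)"
  using prob_space_normal_density by auto

lemma integrable_normal_measure_id: "0 < s \<Longrightarrow> integrable (normal_measure s) (\<lambda>x. x)"
  by (subst integrable_density) (auto simp: integrable_normal_moment_nz_1)

lemma integrable_normal_measure_square: "0 < s \<Longrightarrow> integrable (normal_measure s) (\<lambda>x. x\<^sup>2)"
  using integrable_normal_moment[of s 0 2] by (subst integrable_density) auto

lemma integral_normal_measure_square: "0 < s \<Longrightarrow> (\<integral>x. x\<^sup>2 \<partial>normal_measure s) = s\<^sup>2"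
  using integral_normal_moment_even[of s 0 1] by (subst integral_density) auto

lemma integrable_normal_measure_bounded:
  fixes g :: "real \<Rightarrow> real"
  assumes "0 < s" "g \<in> borel_measurable borel" "\<And>x. \<bar>g x\<bar> \<le> B"
  shows "integrable (normal_measure s) g"
proof -
  interpret prob_space "normal_measure s" by (rule prob_space_normal_measure) fact
  show ?thesis
    by (rule integrable_const_bound[where B=B]) (use assms in auto)
qed

lemma norm_mult_le_mult_abs:
  fixes x y B :: real
  assumes "\<bar>y\<bar> \<le> B"
  shows "norm (x * y) \<le> norm (B * \<bar>x\<bar>)"
proof -
  have "0 \<le> B"
    using assms abs_ge_zero order_trans by blast
  moreover have "\<bar>x\<bar> * \<bar>y\<bar> \<le> \<bar>x\<bar> * B"
    using assms by (rule mult_left_mono) simp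
  ultimately show ?thesis
    by (simp add: abs_mult ac_simps)
qed

lemma integrable_normal_measure_id_mult_bounded:
  fixes g :: "real \<Rightarrow> real"
  assumes s: "0 < s" and [measurable]: "g \<in> borel_measurable borel" and bound: "\<And>x. \<bar>g x\<bar> \<le> B"
  shows "integrable (normal_measure s) (\<lambda>x. x * g x)"
proof (rule Bochner_Integration.integrable_bound[where f="\<lambda>x. B * \<bar>x\<bar>"])
  show "integrable (normal_measure s) (\<lambda>x. B * \<bar>x\<bar>)"
    using integrable_abs[OF integrable_normal_measure_id[OF s]] by simp
  show "AE x in normal_measure s. norm (x * g x) \<le> norm (B * \<bar>x\<bar>)"
    using bound by (intro AE_I2 norm_mult_le_mult_abs)
qed simp

text \<open>Stein's lemma, by integration by parts against the density \<open>p\<close>, using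
  \<open>p' x = - x / s\<^sup>2 * p x\<close>.\<close>
lemma gaussian_integration_by_parts:
  fixes g g' :: "real \<Rightarrow> real"
  assumes s: "0 < s"
    and g_bound: "\<And>x. \<bar>g x\<bar> \<le> B" and g'_bound: "\<And>x. \<bar>g' x\<bar> \<le> B'"
    and deriv: "\<And>x. (g has_real_derivative g' x) (at x)"
    and cont: "\<And>x. isCont g' x"
  shows "(\<integral>x. x * g x \<partial>normal_measure s) = s\<^sup>2 * (\<integral>x. g' x \<partial>normal_measure s)"
proof -
  let ?p = "normal_density 0 s"
  have g_cont: "isCont g x" for x using deriv by (rule DERIV_isCont)
  have [measurable]: "g \<in> borel_measurable borel"
    using g_cont by (intro borel_measurable_continuous_onI continuous_at_imp_continuous_on) auto
  have [measurable]: "g' \<in> borel_measurable borel"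
    by (rule borel_measurable_continuous_onI, rule continuous_at_imp_continuous_on) (use cont in auto)
  have "integrable (normal_measure s) g'"
    by (rule integrable_normal_measure_bounded[OF s _ g'_bound]) measurable
  then have int_g': "integrable lborel (\<lambda>x. ?p x * g' x)"
    by (subst (asm) integrable_density) auto
  have "integrable (normal_measure s) (\<lambda>x. x * g x)"
    by (rule integrable_normal_measure_id_mult_bounded[OF s _ g_bound]) measurable
  then have int_xg: "integrable lborel (\<lambda>x. ?p x * (x * g x))"
    by (subst (asm) integrable_density) auto
  have "(\<integral>x. s\<^sup>2 * (?p x * g' x) - ?p x * (x * g x) \<partial>lborel) = 0"
  proof (rule integral_lborel_derivative_eq_0[where F="\<lambda>x. s\<^sup>2 * (g x * ?p x)"])
    show "((\<lambda>x. s\<^sup>2 * (g x * ?p x)) has_real_derivative s\<^sup>2 * (?p x * g' x) - ?p x * (x * g x)) (at x)"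
      for x
    proof -
      have "((\<lambda>x. s\<^sup>2 * (g x * ?p x)) has_real_derivative s\<^sup>2 * (g' x * ?p x + (- x / s\<^sup>2 * ?p x) * g x))
          (at x)"
        by (intro DERIV_cmult DERIV_mult deriv normal_density_has_real_derivative s)
      moreover have "s\<^sup>2 * (g' x * ?p x + (- x / s\<^sup>2 * ?p x) * g x)
          = s\<^sup>2 * (?p x * g' x) - ?p x * (x * g x)"
        using s by (simp add: field_simps)
      ultimately show ?thesis by simp
    qed
    show "isCont (\<lambda>x. s\<^sup>2 * (?p x * g' x) - ?p x * (x * g x)) x" for x
      using DERIV_isCont[OF normal_density_has_real_derivative[OF s]] cont g_cont
      by (intro continuous_intros) auto
    show "integrable lborel (\<lambda>x. s\<^sup>2 * (?p x * g' x) - ?p x * (x * g x))"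
      using int_g' int_xg by auto
    show "((\<lambda>x. s\<^sup>2 * (g x * ?p x)) \<longlongrightarrow> 0) at_top" "((\<lambda>x. s\<^sup>2 * (g x * ?p x)) \<longlongrightarrow> 0) at_bot"
      using tendsto_bounded_mult_normal_density_0[OF s g_bound] by (auto intro: tendsto_mult_right_zero)
  qed
  then show ?thesis
    using int_g' int_xg by (simp add: integral_density)
qed

lemma prob_space_gaussian_product: "0 < s \<Longrightarrow> prob_space (gaussian_product s)"
  by (intro prob_space_PiM prob_space_normal_measure)

lemma distr_gaussian_product_component:
  "0 < s \<Longrightarrow> distr (gaussian_product s) (normal_measure s) (\<lambda>w. w a) = normal_measure s"
  by (rule distr_PiM_component) (auto intro: prob_space_normal_measure)

lemma integrable_gaussian_product_component:
  fixes f :: "real \<Rightarrow> real"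
  assumes "0 < s" "integrable (normal_measure s) f"
  shows "integrable (gaussian_product s) (\<lambda>w. f (w a))"
proof -
  have "(\<lambda>w. w a) \<in> measurable (gaussian_product s) (normal_measure s)"
    by (rule measurable_component_singleton) simp
  moreover have "integrable (distr (gaussian_product s) (normal_measure s) (\<lambda>w. w a)) f"
    using assms by (simp add: distr_gaussian_product_component)
  ultimately show ?thesis
    using integrable_distr_eq[of "\<lambda>w. w a" "gaussian_product s" "normal_measure s" f] assms(2)
    by auto
qed

lemma integral_gaussian_product_component:
  fixes f :: "real \<Rightarrow> real"
  assumes "0 < s" "f \<in> borel_measurable borel"
  shows "(\<integral>w. f (w a) \<partial>gaussian_product s) = (\<integral>x. f x \<partial>normal_measure s)"
proof -
  have "(\<lambda>w. w a) \<in> measurable (gaussian_product s) (normal_measure s)"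
    by (rule measurable_component_singleton) simp
  moreover have "f \<in> borel_measurable (normal_measure s)"
    using assms(2) by simp
  ultimately have "(\<integral>w. f (w a) \<partial>gaussian_product s)
      = (\<integral>x. f x \<partial>distr (gaussian_product s) (normal_measure s) (\<lambda>w. w a))"
    by (rule integral_distr[symmetric])
  then show ?thesis
    using assms(1) by (simp add: distr_gaussian_product_component)
qed

lemma integrable_gaussian_product_abs_component:
  "0 < s \<Longrightarrow> integrable (gaussian_product s) (\<lambda>w. \<bar>w a\<bar>)"
  using integrable_gaussian_product_component[OF _ integrable_abs[OF integrable_normal_measure_id]]
  by simp

lemma integral_gaussian_product_sum_squares:
  fixes f :: "'j::finite \<Rightarrow> 'd::finite"
  assumes s: "0 < s"
  shows "(\<integral>w. (\<Sum>j\<in>UNIV. (w (f j))\<^sup>2) \<partial>(gaussian_product s :: ('d \<Rightarrow> real) measure))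
    = real CARD('j) * s\<^sup>2"
proof -
  have int: "integrable (gaussian_product s :: ('d \<Rightarrow> real) measure) (\<lambda>w. (w a)\<^sup>2)" for a
    using integrable_gaussian_product_component[OF s integrable_normal_measure_square[OF s], of a]
    by simp
  have "(\<integral>w. (\<Sum>j\<in>UNIV. (w (f j))\<^sup>2) \<partial>(gaussian_product s :: ('d \<Rightarrow> real) measure))
      = (\<Sum>j\<in>UNIV. \<integral>w. (w (f j))\<^sup>2 \<partial>gaussian_product s)"
    by (rule Bochner_Integration.integral_sum) (rule int)
  also have "\<dots> = (\<Sum>j\<in>(UNIV::'j set). s\<^sup>2)"
    by (intro sum.cong refl)
      (simp add: integral_gaussian_product_component[OF s, of "\<lambda>x. x\<^sup>2"]
        integral_normal_measure_square[OF s])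
  finally show ?thesis by simp
qed

lemma gaussian_product_integration_by_parts:
  fixes f f' :: "('d::finite \<Rightarrow> real) \<Rightarrow> real" and a :: 'd
  assumes s: "0 < s"
    and [measurable]: "f \<in> borel_measurable (gaussian_product s)"
      "f' \<in> borel_measurable (gaussian_product s)"
    and f_bound: "\<And>w. \<bar>f w\<bar> \<le> B" and f'_bound: "\<And>w. \<bar>f' w\<bar> \<le> B'"
    and deriv: "\<And>w t. ((\<lambda>r. f (w(a:=r))) has_real_derivative f' (w(a:=t))) (at t)"
    and cont: "\<And>w t. isCont (\<lambda>r. f' (w(a:=r))) t"
  shows "(\<integral>w. w a * f w \<partial>gaussian_product s) = s\<^sup>2 * (\<integral>w. f' w \<partial>gaussian_product s)"
proof -
  interpret product_sigma_finite "\<lambda>_::'d. normal_measure s"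
    unfolding product_sigma_finite_def using prob_space_normal_measure[OF s]
    by (simp add: prob_space_imp_sigma_finite)
  interpret prob_space "gaussian_product s :: ('d \<Rightarrow> real) measure"
    by (rule prob_space_gaussian_product[OF s])
  define I where "I = UNIV - {a}"
  have UNIV_eq: "UNIV = insert a I" and "a \<notin> I" "finite I"
    unfolding I_def by auto
  note integral_insert = product_integral_insert[OF \<open>finite I\<close> \<open>a \<notin> I\<close>]
  have "integrable (gaussian_product s) (\<lambda>w. w a * f w)"
  proof (rule Bochner_Integration.integrable_bound[where f="\<lambda>w. B * \<bar>w a\<bar>"])
    show "integrable (gaussian_product s) (\<lambda>w. B * \<bar>w a\<bar>)"
      by (intro integrable_mult_right integrable_gaussian_product_abs_component[OF s])
    show "AE w in gaussian_product s. norm (w a * f w) \<le> norm (B * \<bar>w a\<bar>)"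
      using f_bound by (intro AE_I2 norm_mult_le_mult_abs)
  qed simp
  then have "(\<integral>w. w a * f w \<partial>gaussian_product s)
      = (\<integral>x. (\<integral>y. y * f (x(a:=y)) \<partial>normal_measure s) \<partial>PiM I (\<lambda>_. normal_measure s))"
    using integral_insert[of "\<lambda>w. w a * f w"] unfolding UNIV_eq by simp
  also have "\<dots> = (\<integral>x. s\<^sup>2 * (\<integral>y. f' (x(a:=y)) \<partial>normal_measure s) \<partial>PiM I (\<lambda>_. normal_measure s))"
  proof (rule Bochner_Integration.integral_cong[OF refl])
    fix x
    show "(\<integral>y. y * f (x(a:=y)) \<partial>normal_measure s) = s\<^sup>2 * (\<integral>y. f' (x(a:=y)) \<partial>normal_measure s)"
      by (rule gaussian_integration_by_parts[OF s]) (use f_bound f'_bound deriv cont in auto)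
  qed
  also have "\<dots> = s\<^sup>2 * (\<integral>w. f' w \<partial>gaussian_product s)"
  proof -
    have "integrable (gaussian_product s) f'"
      by (rule integrable_const_bound[where B=B']) (use f'_bound in auto)
    then show ?thesis
      using integral_insert[of f'] unfolding UNIV_eq by simp
  qed
  finally show ?thesis .
qed

section \<open>Smooth maximum\<close>

definition log_sum_exp :: "'k set \<Rightarrow> real \<Rightarrow> ('k \<Rightarrow> real) \<Rightarrow> real" where
  "log_sum_exp K b x = ln (\<Sum>k\<in>K. exp (b * x k))"

definition softmax :: "'k set \<Rightarrow> real \<Rightarrow> ('k \<Rightarrow> real) \<Rightarrow> 'k \<Rightarrow> real" where
  "softmax K b x k = exp (b * x k) / (\<Sum>l\<in>K. exp (b * x l))"

lemma sum_exp_pos: "finite K \<Longrightarrow> K \<noteq> {} \<Longrightarrow> 0 < (\<Sum>l\<in>K. exp (b * x l :: real))"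
  by (intro sum_pos) auto

lemma softmax_nonneg: "0 \<le> softmax K b x k"
  unfolding softmax_def by (intro divide_nonneg_nonneg sum_nonneg) auto

lemma sum_softmax: "finite K \<Longrightarrow> K \<noteq> {} \<Longrightarrow> (\<Sum>k\<in>K. softmax K b x k) = 1"
  unfolding softmax_def using sum_exp_pos[of K b x]
  by (simp add: sum_divide_distrib[symmetric])

lemma abs_softmax_le_1:
  assumes "finite K" "k \<in> K"
  shows "\<bar>softmax K b x k\<bar> \<le> 1"
proof -
  have "exp (b * x k) \<le> (\<Sum>l\<in>K. exp (b * x l))"
    using assms by (intro member_le_sum) auto
  then show ?thesis
    using sum_exp_pos[of K b x] assms softmax_nonneg[of K b x k]
    by (auto simp: softmax_def divide_le_eq_1)
qed

lemma has_real_derivative_log_sum_exp: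
  fixes x :: "'k \<Rightarrow> real \<Rightarrow> real" and x' :: "'k \<Rightarrow> real"
  assumes K: "finite K" "K \<noteq> {}"
    and deriv: "\<And>k. k \<in> K \<Longrightarrow> ((x k) has_real_derivative x' k) (at t)"
  shows "((\<lambda>t. log_sum_exp K b (\<lambda>k. x k t)) has_real_derivative
           (\<Sum>k\<in>K. softmax K b (\<lambda>k. x k t) k * (b * x' k))) (at t)"
proof -
  let ?S = "\<Sum>l\<in>K. exp (b * x l t)"
  have S: "0 < ?S" by (rule sum_exp_pos[OF K])
  have dS: "((\<lambda>t. \<Sum>l\<in>K. exp (b * x l t)) has_real_derivative
      (\<Sum>l\<in>K. exp (b * x l t) * (b * x' l))) (at t)"
    by (intro DERIV_sum DERIV_fun_exp DERIV_cmult deriv)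
  have "((\<lambda>t. ln (\<Sum>l\<in>K. exp (b * x l t))) has_real_derivative
      inverse ?S * (\<Sum>l\<in>K. exp (b * x l t) * (b * x' l))) (at t)"
    by (rule DERIV_chain2[OF DERIV_ln[OF S] dS])
  moreover have "inverse ?S * (\<Sum>l\<in>K. exp (b * x l t) * (b * x' l))
      = (\<Sum>k\<in>K. softmax K b (\<lambda>k. x k t) k * (b * x' k))"
    unfolding softmax_def by (simp add: sum_divide_distrib field_simps)
  ultimately show ?thesis unfolding log_sum_exp_def by simp
qed

lemma has_real_derivative_softmax:
  fixes x :: "'k \<Rightarrow> real \<Rightarrow> real" and x' :: "'k \<Rightarrow> real"
  assumes K: "finite K" "K \<noteq> {}"
    and deriv: "\<And>k. k \<in> K \<Longrightarrow> ((x k) has_real_derivative x' k) (at t)"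
    and deriv_k: "((x k) has_real_derivative x' k) (at t)"
  shows "((\<lambda>t. softmax K b (\<lambda>k. x k t) k) has_real_derivative
           b * softmax K b (\<lambda>k. x k t) k * (x' k - (\<Sum>l\<in>K. softmax K b (\<lambda>k. x k t) l * x' l))) (at t)"
proof -
  let ?S = "\<Sum>l\<in>K. exp (b * x l t)"
  let ?S' = "\<Sum>l\<in>K. exp (b * x l t) * (b * x' l)"
  have S: "0 < ?S" by (rule sum_exp_pos[OF K])
  have dS: "((\<lambda>t. \<Sum>l\<in>K. exp (b * x l t)) has_real_derivative ?S') (at t)"
    by (intro DERIV_sum DERIV_fun_exp DERIV_cmult deriv)
  have dE: "((\<lambda>t. exp (b * x k t)) has_real_derivative exp (b * x k t) * (b * x' k)) (at t)"
    by (intro DERIV_fun_exp DERIV_cmult deriv_k)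
  have "((\<lambda>t. exp (b * x k t) / (\<Sum>l\<in>K. exp (b * x l t))) has_real_derivative
      (exp (b * x k t) * (b * x' k) * ?S - exp (b * x k t) * ?S') / (?S * ?S)) (at t)"
    using DERIV_divide[OF dE dS] S by simp
  moreover have "(exp (b * x k t) * (b * x' k) * ?S - exp (b * x k t) * ?S') / (?S * ?S) =
      b * softmax K b (\<lambda>k. x k t) k * (x' k - (\<Sum>l\<in>K. softmax K b (\<lambda>k. x k t) l * x' l))"
    unfolding softmax_def using S
    by (simp add: sum_divide_distrib[symmetric] sum_distrib_left field_simps)
  ultimately show ?thesis unfolding softmax_def by simp
qed

lemma mult_le_log_sum_exp:
  assumes "finite K" "k \<in> K"
  shows "b * x k \<le> log_sum_exp K b x"
proof -
  have "exp (b * x k) \<le> (\<Sum>l\<in>K. exp (b * x l))"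
    using assms by (intro member_le_sum) auto
  moreover have "0 < (\<Sum>l\<in>K. exp (b * x l))"
    using assms by (intro sum_pos2[of K k]) auto
  ultimately have "ln (exp (b * x k)) \<le> log_sum_exp K b x"
    unfolding log_sum_exp_def by (subst ln_le_cancel_iff) auto
  then show ?thesis by simp
qed

lemma log_sum_exp_le:
  assumes K: "finite K" "K \<noteq> {}" and b: "0 \<le> b" and bound: "\<And>k. k \<in> K \<Longrightarrow> x k \<le> M"
  shows "log_sum_exp K b x \<le> ln (card K) + b * M"
proof -
  have "(\<Sum>l\<in>K. exp (b * x l)) \<le> (\<Sum>l\<in>K. exp (b * M))"
    using bound b by (intro sum_mono) (auto intro: mult_left_mono)
  also have "\<dots> = card K * exp (b * M)" by simp
  finally have "log_sum_exp K b x \<le> ln (card K * exp (b * M))"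
    unfolding log_sum_exp_def using sum_exp_pos[OF K, of b x] by (subst ln_le_cancel_iff) auto
  also have "\<dots> = ln (card K) + b * M"
    using K by (simp add: ln_mult card_gt_0_iff)
  finally show ?thesis .
qed

lemma abs_log_sum_exp_le:
  assumes K: "finite K" "K \<noteq> {}" and b: "0 \<le> b"
  shows "\<bar>log_sum_exp K b x\<bar> \<le> ln (card K) + b * (\<Sum>k\<in>K. \<bar>x k\<bar>)"
proof -
  obtain k where k: "k \<in> K" using K by auto
  have upper: "log_sum_exp K b x \<le> ln (card K) + b * (\<Sum>k\<in>K. \<bar>x k\<bar>)"
  proof (rule log_sum_exp_le[OF K b])
    fix l assume "l \<in> K"
    show "x l \<le> (\<Sum>k\<in>K. \<bar>x k\<bar>)"
      by (rule order_trans[OF abs_ge_self], rule member_le_sum) (use K \<open>l \<in> K\<close> in auto)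
  qed
  have "- (\<Sum>k\<in>K. \<bar>x k\<bar>) \<le> x k"
    using member_le_sum[of k K "\<lambda>k. \<bar>x k\<bar>"] K k by auto
  then have "- (b * (\<Sum>k\<in>K. \<bar>x k\<bar>)) \<le> b * x k"
    using mult_left_mono[OF _ b] by fastforce
  also have "\<dots> \<le> log_sum_exp K b x"
    by (rule mult_le_log_sum_exp[OF K(1) k])
  finally have lower: "- (b * (\<Sum>k\<in>K. \<bar>x k\<bar>)) \<le> log_sum_exp K b x" .
  have "0 \<le> ln (card K)"
    using K by (simp add: Suc_leI card_gt_0_iff)
  then show ?thesis
    using upper lower by linarith
qed

lemma sum_diag_ge_quadratic_form:
  fixes p :: "'k \<Rightarrow> real" and D :: "'k \<Rightarrow> 'k \<Rightarrow> real"
  assumes K: "finite K" and p: "\<And>k. k \<in> K \<Longrightarrow> 0 \<le> p k" and sum_p: "(\<Sum>k\<in>K. p k) = 1"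
    and D: "\<And>k l. k \<in> K \<Longrightarrow> l \<in> K \<Longrightarrow> 0 \<le> D k k + D l l - 2 * D k l"
  shows "(\<Sum>k\<in>K. \<Sum>l\<in>K. p k * p l * D k l) \<le> (\<Sum>k\<in>K. p k * D k k)"
proof -
  have diag: "(\<Sum>k\<in>K. \<Sum>l\<in>K. p k * p l * D k k) = (\<Sum>k\<in>K. p k * D k k)"
  proof (intro sum.cong refl)
    fix k
    have "(\<Sum>l\<in>K. p k * p l * D k k) = p k * D k k * (\<Sum>l\<in>K. p l)"
      by (simp add: sum_distrib_left mult_ac)
    then show "(\<Sum>l\<in>K. p k * p l * D k k) = p k * D k k"
      using sum_p by simp
  qed
  have diag': "(\<Sum>k\<in>K. \<Sum>l\<in>K. p k * p l * D l l) = (\<Sum>k\<in>K. p k * D k k)"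
  proof -
    have "(\<Sum>k\<in>K. \<Sum>l\<in>K. p k * p l * D l l) = (\<Sum>l\<in>K. \<Sum>k\<in>K. p k * p l * D l l)"
      by (rule sum.swap)
    also have "\<dots> = (\<Sum>l\<in>K. p l * D l l)"
    proof (intro sum.cong refl)
      fix l
      have "(\<Sum>k\<in>K. p k * p l * D l l) = p l * D l l * (\<Sum>k\<in>K. p k)"
        by (simp add: sum_distrib_left mult_ac)
      then show "(\<Sum>k\<in>K. p k * p l * D l l) = p l * D l l"
        using sum_p by simp
    qed
    finally show ?thesis .
  qed
  have "0 \<le> (\<Sum>k\<in>K. \<Sum>l\<in>K. p k * p l * (D k k + D l l - 2 * D k l))"
    using p D by (intro sum_nonneg mult_nonneg_nonneg) auto
  also have "\<dots> = (\<Sum>k\<in>K. \<Sum>l\<in>K. p k * p l * D k k) + (\<Sum>k\<in>K. \<Sum>l\<in>K. p k * p l * D l l)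
       - 2 * (\<Sum>k\<in>K. \<Sum>l\<in>K. p k * p l * D k l)"
  proof -
    have "p k * p l * (D k k + D l l - 2 * D k l)
        = p k * p l * D k k + p k * p l * D l l - 2 * (p k * p l * D k l)"
      for k l
      by (simp add: algebra_simps)
    then show ?thesis
      by (simp only: sum.distrib sum_subtractf sum_distrib_left[symmetric])
  qed
  finally show ?thesis
    unfolding diag diag' by simp
qed

lemma sum_square_diff:
  "(\<Sum>a\<in>A. (x a - y a)\<^sup>2) = (\<Sum>a\<in>A. x a * x a) + (\<Sum>a\<in>A. y a * y a) - 2 * (\<Sum>a\<in>A. x a * y a :: real)"
proof -
  have "(x a - y a)\<^sup>2 = x a * x a + y a * y a - 2 * (x a * y a)" for a
    by (simp add: power2_eq_square algebra_simps)
  then show ?thesis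
    by (simp only: sum.distrib sum_subtractf sum_distrib_left[symmetric])
qed

definition linear_form :: "('d::finite \<Rightarrow> real) \<Rightarrow> ('d \<Rightarrow> real) \<Rightarrow> real" where
  "linear_form c w = (\<Sum>a\<in>UNIV. c a * w a)"

lemma linear_form_fun_upd: "linear_form c (w(a:=r)) = linear_form c w + c a * (r - w a)"
proof -
  have "linear_form c (w(a:=r)) = (\<Sum>i\<in>UNIV. c i * w i + (if i = a then c a * (r - w a) else 0))"
    unfolding linear_form_def by (intro sum.cong) (auto simp: algebra_simps)
  then show ?thesis
    by (simp add: sum.distrib linear_form_def)
qed

lemma has_real_derivative_linear_form_coord:
  "((\<lambda>r. linear_form c (w(a:=r))) has_real_derivative c a) (at t)"
  unfolding linear_form_fun_upd by (auto intro!: derivative_eq_intros)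

lemma measurable_linear_form[measurable]: "linear_form c \<in> borel_measurable (gaussian_product s)"
  unfolding linear_form_def by measurable

lemma integrable_log_sum_exp:
  fixes c :: "'k \<Rightarrow> 'd::finite \<Rightarrow> real"
  assumes s: "0 < s" and b: "0 \<le> b" and K: "finite K" "K \<noteq> {}"
  shows "integrable (gaussian_product s) (\<lambda>w. log_sum_exp K b (\<lambda>k. linear_form (c k) w))"
proof (rule Bochner_Integration.integrable_bound)
  interpret prob_space "gaussian_product s :: ('d \<Rightarrow> real) measure"
    by (rule prob_space_gaussian_product[OF s])
  let ?B = "\<lambda>w. ln (card K) + b * (\<Sum>k\<in>K. \<Sum>a\<in>UNIV. \<bar>c k a\<bar> * \<bar>w a\<bar>)"
  show "integrable (gaussian_product s) ?B"
    by (intro Bochner_Integration.integrable_add integrable_mult_right Bochner_Integration.integrable_sum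
        integrable_gaussian_product_abs_component[OF s] integrable_const)
  show "(\<lambda>w. log_sum_exp K b (\<lambda>k. linear_form (c k) w)) \<in> borel_measurable (gaussian_product s)"
    unfolding log_sum_exp_def by measurable
  show "AE w in gaussian_product s. norm (log_sum_exp K b (\<lambda>k. linear_form (c k) w)) \<le> norm (?B w)"
  proof (intro AE_I2)
    fix w :: "'d \<Rightarrow> real"
    have "\<bar>log_sum_exp K b (\<lambda>k. linear_form (c k) w)\<bar> \<le> ln (card K) + b * (\<Sum>k\<in>K. \<bar>linear_form (c k) w\<bar>)"
      by (rule abs_log_sum_exp_le[OF K b])
    also have "\<dots> \<le> ?B w"
      using b unfolding linear_form_def
      by (intro add_left_mono mult_left_mono sum_mono order_trans[OF sum_abs]) (auto simp: abs_mult)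
    finally show "norm (log_sum_exp K b (\<lambda>k. linear_form (c k) w)) \<le> norm (?B w)"
      by simp
  qed
qed

section \<open>Gaussian comparison of smooth maxima\<close>

text \<open>Interpolate between the Gaussian processes \<open>\<langle>P k, w\<rangle>\<close> and \<open>\<langle>Q k, w\<rangle>\<close> along
  \<open>cos t P + sin t Q\<close>, \<open>0 \<le> t \<le> pi/2\<close>. Stein's lemma turns the \<open>t\<close>-derivative of the expected
  smooth maximum into \<open>b s\<^sup>2 (\<Sum>\<^sub>k p\<^sub>k C\<^sub>k\<^sub>k - \<Sum>\<^sub>k\<^sub>l p\<^sub>k p\<^sub>l C\<^sub>k\<^sub>l)\<close> with softmax weights \<open>p\<close>, and
  \<open>C\<^sub>k\<^sub>l = sin t cos t (\<langle>Q k, Q l\<rangle> - \<langle>P k, P l\<rangle>)\<close> because the two processes are uncorrelated;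
  this is nonnegative as soon as the increments of \<open>Q\<close> dominate those of \<open>P\<close>.\<close>

locale gaussian_interpolation =
  fixes s b :: real and K :: "'k set" and P Q :: "'k \<Rightarrow> 'd::finite \<Rightarrow> real"
  assumes s: "0 < s" and b: "0 < b" and K: "finite K" "K \<noteq> {}"
    and uncorrelated: "\<And>k l. (\<Sum>a\<in>UNIV. P k a * Q l a) = 0"
    and increments: "\<And>k l. k \<in> K \<Longrightarrow> l \<in> K \<Longrightarrow>
      (\<Sum>a\<in>UNIV. (P k a - P l a)\<^sup>2) \<le> (\<Sum>a\<in>UNIV. (Q k a - Q l a)\<^sup>2)"
begin

definition "path_coeff t k a = cos t * P k a + sin t * Q k a"
definition "path_coeff_dt t k a = - sin t * P k a + cos t * Q k a"
definition "process t w = (\<lambda>k. linear_form (path_coeff t k) w)"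
definition "smooth_max t w = log_sum_exp K b (process t w)"
definition "smooth_max_dt t w =
  (\<Sum>k\<in>K. softmax K b (process t w) k * (b * linear_form (path_coeff_dt t k) w))"
definition "softmax_dw t k a w = b * softmax K b (process t w) k *
  (path_coeff t k a - (\<Sum>l\<in>K. softmax K b (process t w) l * path_coeff t l a))"
definition "cross_cov t k l = (\<Sum>a\<in>UNIV. path_coeff_dt t k a * path_coeff t l a)"

lemma measurable_softmax_process[measurable]:
  "(\<lambda>w. softmax K b (process t w) k) \<in> borel_measurable (gaussian_product s)"
  unfolding softmax_def process_def by measurable

lemma measurable_softmax_dw[measurable]: "softmax_dw t k a \<in> borel_measurable (gaussian_product s)"
  unfolding softmax_dw_def by measurable

lemma abs_softmax_dw_le:
  assumes k: "k \<in> K"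
  shows "\<bar>softmax_dw t k a w\<bar> \<le> b * (\<bar>path_coeff t k a\<bar> + (\<Sum>l\<in>K. \<bar>path_coeff t l a\<bar>))"
proof -
  let ?p = "softmax K b (process t w)"
  have "\<bar>\<Sum>l\<in>K. ?p l * path_coeff t l a\<bar> \<le> (\<Sum>l\<in>K. \<bar>path_coeff t l a\<bar>)"
    using abs_softmax_le_1[OF K(1)]
    by (intro order_trans[OF sum_abs] sum_mono) (simp add: abs_mult mult_left_le_one_le)
  then have "\<bar>path_coeff t k a - (\<Sum>l\<in>K. ?p l * path_coeff t l a)\<bar>
      \<le> \<bar>path_coeff t k a\<bar> + (\<Sum>l\<in>K. \<bar>path_coeff t l a\<bar>)"
    by linarith
  moreover have "\<bar>softmax_dw t k a w\<bar>
      = b * \<bar>?p k\<bar> * \<bar>path_coeff t k a - (\<Sum>l\<in>K. ?p l * path_coeff t l a)\<bar>"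
    unfolding softmax_dw_def using b by (simp add: abs_mult)
  ultimately show ?thesis
    using b abs_softmax_le_1[OF K(1) k] by (simp add: mult_le_one mult_mono)
qed

lemma has_real_derivative_softmax_coord:
  "((\<lambda>r. softmax K b (process t (w(a:=r))) k) has_real_derivative softmax_dw t k a (w(a:=r0))) (at r0)"
proof -
  have "((\<lambda>r. softmax K b (\<lambda>l. linear_form (path_coeff t l) (w(a:=r))) k) has_real_derivative
     b * softmax K b (\<lambda>l. linear_form (path_coeff t l) (w(a:=r0))) k
       * (path_coeff t k a - (\<Sum>l\<in>K. softmax K b (\<lambda>l. linear_form (path_coeff t l) (w(a:=r0))) l
           * path_coeff t l a))) (at r0)"
    by (rule has_real_derivative_softmax[OF K]) (rule has_real_derivative_linear_form_coord)+
  then show ?thesis unfolding softmax_dw_def process_def by simp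
qed

lemma isCont_softmax_dw_coord: "isCont (\<lambda>r. softmax_dw t k a (w(a:=r))) r0"
  unfolding softmax_dw_def
  by (intro continuous_intros DERIV_isCont[OF has_real_derivative_softmax_coord])

lemma integration_by_parts_softmax:
  assumes k: "k \<in> K"
  shows "(\<integral>w. w a * softmax K b (process t w) k \<partial>gaussian_product s)
    = s\<^sup>2 * (\<integral>w. softmax_dw t k a w \<partial>gaussian_product s)"
  by (rule gaussian_product_integration_by_parts[OF s, where B=1
        and B'="b * (\<bar>path_coeff t k a\<bar> + (\<Sum>l\<in>K. \<bar>path_coeff t l a\<bar>))"])
     (use abs_softmax_le_1[OF K(1) k] abs_softmax_dw_le[OF k] has_real_derivative_softmax_coord
        isCont_softmax_dw_coord in auto)

lemma cross_cov_eq: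
  "cross_cov t k l = sin t * cos t * ((\<Sum>a\<in>UNIV. Q k a * Q l a) - (\<Sum>a\<in>UNIV. P k a * P l a))"
proof -
  have "cross_cov t k l = (\<Sum>a\<in>UNIV. sin t * cos t * (Q k a * Q l a) - sin t * cos t * (P k a * P l a)
      + (cos t)\<^sup>2 * (P l a * Q k a) - (sin t)\<^sup>2 * (P k a * Q l a))"
    unfolding cross_cov_def path_coeff_dt_def path_coeff_def
    by (intro sum.cong refl) (simp add: algebra_simps power2_eq_square)
  also have "\<dots> = sin t * cos t * (\<Sum>a\<in>UNIV. Q k a * Q l a) - sin t * cos t * (\<Sum>a\<in>UNIV. P k a * P l a)
      + (cos t)\<^sup>2 * (\<Sum>a\<in>UNIV. P l a * Q k a) - (sin t)\<^sup>2 * (\<Sum>a\<in>UNIV. P k a * Q l a)"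
    by (simp add: sum.distrib sum_subtractf sum_distrib_left)
  also have "\<dots> = sin t * cos t * ((\<Sum>a\<in>UNIV. Q k a * Q l a) - (\<Sum>a\<in>UNIV. P k a * P l a))"
    using uncorrelated[of k l] uncorrelated[of l k] by (simp add: algebra_simps)
  finally show ?thesis .
qed

lemma cross_cov_increment_nonneg:
  assumes t: "0 \<le> t" "t \<le> pi/2" and kl: "k \<in> K" "l \<in> K"
  shows "0 \<le> cross_cov t k k + cross_cov t l l - 2 * cross_cov t k l"
proof -
  have "0 \<le> sin t * cos t"
    using t by (intro mult_nonneg_nonneg sin_ge_zero cos_ge_zero) auto
  moreover have "cross_cov t k k + cross_cov t l l - 2 * cross_cov t k l
    = sin t * cos t * ((\<Sum>a\<in>UNIV. (Q k a - Q l a)\<^sup>2) - (\<Sum>a\<in>UNIV. (P k a - P l a)\<^sup>2))"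
    unfolding cross_cov_eq sum_square_diff by (simp add: algebra_simps)
  ultimately show ?thesis
    using increments[OF kl] by simp
qed

lemma sum_coeff_dt_softmax_dw_nonneg:
  assumes t: "0 \<le> t" "t \<le> pi/2"
  shows "0 \<le> (\<Sum>k\<in>K. \<Sum>a\<in>UNIV. path_coeff_dt t k a * softmax_dw t k a w)"
proof -
  define p where "p = softmax K b (process t w)"
  have "(\<Sum>a\<in>UNIV. path_coeff_dt t k a * softmax_dw t k a w)
      = b * (p k * cross_cov t k k - (\<Sum>l\<in>K. p k * p l * cross_cov t k l))" for k
  proof -
    have "(\<Sum>a\<in>UNIV. path_coeff_dt t k a * softmax_dw t k a w)
        = (\<Sum>a\<in>UNIV. b * p k * (path_coeff_dt t k a * path_coeff t k a)
            - b * p k * (\<Sum>l\<in>K. p l * (path_coeff_dt t k a * path_coeff t l a)))"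
      unfolding softmax_dw_def p_def[symmetric]
      by (intro sum.cong refl) (simp add: algebra_simps sum_distrib_left)
    also have "\<dots> = b * p k * cross_cov t k k - b * p k * (\<Sum>l\<in>K. p l * cross_cov t k l)"
      unfolding cross_cov_def
      by (simp add: sum_subtractf sum_distrib_left[symmetric])
        (subst sum.swap, simp add: sum_distrib_left)
    finally show ?thesis by (simp add: algebra_simps sum_distrib_left)
  qed
  then have "(\<Sum>k\<in>K. \<Sum>a\<in>UNIV. path_coeff_dt t k a * softmax_dw t k a w)
      = b * ((\<Sum>k\<in>K. p k * cross_cov t k k) - (\<Sum>k\<in>K. \<Sum>l\<in>K. p k * p l * cross_cov t k l))"
    by (simp only: sum_distrib_left[symmetric] sum_subtractf)
  moreover have "(\<Sum>k\<in>K. \<Sum>l\<in>K. p k * p l * cross_cov t k l) \<le> (\<Sum>k\<in>K. p k * cross_cov t k k)"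
    by (rule sum_diag_ge_quadratic_form[OF K(1)])
      (use softmax_nonneg sum_softmax[OF K] cross_cov_increment_nonneg[OF t] in \<open>auto simp: p_def\<close>)
  ultimately show ?thesis
    using b by simp
qed

lemma integral_smooth_max_dt_nonneg:
  assumes t: "0 \<le> t" "t \<le> pi/2"
  shows "0 \<le> (\<integral>w. smooth_max_dt t w \<partial>gaussian_product s)"
proof -
  interpret prob_space "gaussian_product s :: ('d \<Rightarrow> real) measure"
    by (rule prob_space_gaussian_product[OF s])
  have int_softmax: "integrable (gaussian_product s) (\<lambda>w. w a * softmax K b (process t w) k)"
    if "k \<in> K" for k a
    by (rule Bochner_Integration.integrable_bound[OF
          integrable_gaussian_product_abs_component[OF s, of a]])
      (use abs_softmax_le_1[OF K(1) that] in \<open>auto intro!: AE_I2 simp: abs_mult mult_left_le\<close>)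
  have int_softmax_dw: "integrable (gaussian_product s) (softmax_dw t k a)" if "k \<in> K" for k a
    by (rule integrable_const_bound[where B="b * (\<bar>path_coeff t k a\<bar> + (\<Sum>l\<in>K. \<bar>path_coeff t l a\<bar>))"])
      (use abs_softmax_dw_le[OF that] in auto)
  have "smooth_max_dt t w
      = (\<Sum>k\<in>K. \<Sum>a\<in>UNIV. (b * path_coeff_dt t k a) * (w a * softmax K b (process t w) k))" for w
    unfolding smooth_max_dt_def linear_form_def
    by (intro sum.cong refl) (simp add: sum_distrib_left mult_ac)
  then have "(\<integral>w. smooth_max_dt t w \<partial>gaussian_product s)
      = (\<Sum>k\<in>K. \<Sum>a\<in>UNIV. (b * path_coeff_dt t k a) *
          (\<integral>w. w a * softmax K b (process t w) k \<partial>gaussian_product s))"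
    by (simp add: Bochner_Integration.integral_sum Bochner_Integration.integrable_sum int_softmax)
  also have "\<dots> = (\<Sum>k\<in>K. \<Sum>a\<in>UNIV. (b * path_coeff_dt t k a) *
      (s\<^sup>2 * (\<integral>w. softmax_dw t k a w \<partial>gaussian_product s)))"
    by (intro sum.cong refl) (simp add: integration_by_parts_softmax)
  also have "\<dots> = (\<integral>w. b * s\<^sup>2 * (\<Sum>k\<in>K. \<Sum>a\<in>UNIV. path_coeff_dt t k a * softmax_dw t k a w)
      \<partial>gaussian_product s)"
    by (simp add: Bochner_Integration.integral_sum Bochner_Integration.integrable_sum int_softmax_dw
        sum_distrib_left mult_ac)
  also have "0 \<le> \<dots>"
    by (rule Bochner_Integration.integral_nonneg) (use b sum_coeff_dt_softmax_dw_nonneg[OF t] in auto)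
  finally show ?thesis .
qed

lemma has_real_derivative_linear_form_coeff:
  "((\<lambda>t. linear_form (path_coeff t k) w) has_real_derivative linear_form (path_coeff_dt t k) w) (at t)"
  unfolding linear_form_def path_coeff_def path_coeff_dt_def
  by (intro DERIV_sum) (auto intro!: derivative_eq_intros)

lemma has_real_derivative_smooth_max:
  "((\<lambda>t. smooth_max t w) has_real_derivative smooth_max_dt t w) (at t)"
  unfolding smooth_max_def smooth_max_dt_def process_def
  by (rule has_real_derivative_log_sum_exp[OF K]) (rule has_real_derivative_linear_form_coeff)

lemma isCont_smooth_max_dt: "isCont (\<lambda>t. smooth_max_dt t w) t"
proof -
  have "isCont (\<lambda>t. softmax K b (\<lambda>l. linear_form (path_coeff t l) w) k) t" for k
    by (rule DERIV_isCont, rule has_real_derivative_softmax[OF K])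
      (rule has_real_derivative_linear_form_coeff)+
  then show ?thesis
    unfolding smooth_max_dt_def process_def linear_form_def path_coeff_dt_def
    by (intro continuous_intros)
qed

definition "smooth_max_dt_bound w = b * (\<Sum>k\<in>K. \<Sum>a\<in>UNIV. (\<bar>P k a\<bar> + \<bar>Q k a\<bar>) * \<bar>w a\<bar>)"

lemma abs_smooth_max_dt_le: "\<bar>smooth_max_dt t w\<bar> \<le> smooth_max_dt_bound w"
proof -
  let ?S = "\<lambda>k. \<Sum>a\<in>UNIV. (\<bar>P k a\<bar> + \<bar>Q k a\<bar>) * \<bar>w a\<bar>"
  have "\<bar>linear_form (path_coeff_dt t k) w\<bar> \<le> ?S k" for k
  proof -
    have "\<bar>path_coeff_dt t k a\<bar> \<le> \<bar>P k a\<bar> + \<bar>Q k a\<bar>" for a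
      unfolding path_coeff_dt_def
      by (rule order_trans[OF abs_triangle_ineq]) (simp add: abs_mult add_mono mult_left_le_one_le)
    then show ?thesis
      unfolding linear_form_def
      by (intro order_trans[OF sum_abs] sum_mono) (simp add: abs_mult mult_right_mono)
  qed
  then have "b * \<bar>linear_form (path_coeff_dt t k) w\<bar> \<le> b * ?S k" for k
    using b by (intro mult_left_mono) auto
  then have "\<bar>softmax K b (process t w) k\<bar> * (b * \<bar>linear_form (path_coeff_dt t k) w\<bar>) \<le> 1 * (b * ?S k)"
    if "k \<in> K" for k
    using abs_softmax_le_1[OF K(1) that] b by (intro mult_mono) auto
  then show ?thesis
    unfolding smooth_max_dt_def smooth_max_dt_bound_def sum_distrib_left
    using b by (intro order_trans[OF sum_abs] sum_mono) (simp add: abs_mult)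
qed

lemma integrable_smooth_max_dt_pair:
  "integrable (lborel \<Otimes>\<^sub>M gaussian_product s)
    (\<lambda>p. smooth_max_dt (fst p) (snd p) * indicator {0..pi/2} (fst p))"
proof -
  interpret P: prob_space "gaussian_product s :: ('d \<Rightarrow> real) measure"
    by (rule prob_space_gaussian_product[OF s])
  interpret pair_sigma_finite lborel "gaussian_product s :: ('d \<Rightarrow> real) measure"
    unfolding pair_sigma_finite_def using P.sigma_finite_measure_axioms sigma_finite_lborel by simp
  have bound_nonneg: "0 \<le> smooth_max_dt_bound w" for w
    unfolding smooth_max_dt_bound_def using b by (intro mult_nonneg_nonneg sum_nonneg) auto
  have [measurable]: "smooth_max_dt_bound \<in> borel_measurable (gaussian_product s)"
    unfolding smooth_max_dt_bound_def by measurable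
  have "integrable (gaussian_product s) smooth_max_dt_bound"
    unfolding smooth_max_dt_bound_def
    by (intro integrable_mult_right Bochner_Integration.integrable_sum
        integrable_gaussian_product_abs_component[OF s])
  then have "integrable (lborel \<Otimes>\<^sub>M gaussian_product s)
      (\<lambda>p. indicator {0..pi/2} (fst p) * smooth_max_dt_bound (snd p))"
  proof (intro Fubini_integrable)
    assume int: "integrable (gaussian_product s) smooth_max_dt_bound"
    have "(\<lambda>x. \<integral>y. norm (indicator {0..pi/2} x * smooth_max_dt_bound y) \<partial>gaussian_product s)
        = (\<lambda>x. indicator {0..pi/2} x * (\<integral>y. smooth_max_dt_bound y \<partial>gaussian_product s))"
      using bound_nonneg by (auto simp: abs_mult indicator_def)
    then show "integrable lborel
        (\<lambda>x. \<integral>y. norm (indicator {0..pi/2} (fst (x, y)) * smooth_max_dt_bound (snd (x, y)))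
          \<partial>gaussian_product s)"
      by (simp add: integrable_real_indicator)
    show "AE x in lborel. integrable (gaussian_product s)
        (\<lambda>y. indicator {0..pi/2} (fst (x, y)) * smooth_max_dt_bound (snd (x, y)))"
      using int by (auto intro!: AE_I2 integrable_mult_right)
  qed measurable
  then show ?thesis
  proof (rule Bochner_Integration.integrable_bound)
    show "(\<lambda>p. smooth_max_dt (fst p) (snd p) * indicator {0..pi/2} (fst p))
        \<in> borel_measurable (lborel \<Otimes>\<^sub>M gaussian_product s)"
      unfolding smooth_max_dt_def softmax_def process_def linear_form_def path_coeff_def path_coeff_dt_def
      by measurable
  qed (use abs_smooth_max_dt_le bound_nonneg in \<open>auto intro!: AE_I2 simp: indicator_def\<close>)
qed

lemma expected_smooth_max_mono:
  "(\<integral>w. smooth_max 0 w \<partial>gaussian_product s) \<le> (\<integral>w. smooth_max (pi/2) w \<partial>gaussian_product s)"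
proof -
  interpret P: prob_space "gaussian_product s :: ('d \<Rightarrow> real) measure"
    by (rule prob_space_gaussian_product[OF s])
  interpret pair_sigma_finite lborel "gaussian_product s :: ('d \<Rightarrow> real) measure"
    unfolding pair_sigma_finite_def using P.sigma_finite_measure_axioms sigma_finite_lborel by simp
  have integrable: "integrable (gaussian_product s) (smooth_max t)" for t
    unfolding smooth_max_def process_def using s b K by (intro integrable_log_sum_exp) auto
  have "smooth_max (pi/2) w - smooth_max 0 w = (\<integral>t. smooth_max_dt t w * indicator {0..pi/2} t \<partial>lborel)"
    for w
    by (rule integral_FTC_Icc_real[symmetric])
      (use has_real_derivative_smooth_max isCont_smooth_max_dt in auto)
  then have "(\<integral>w. smooth_max (pi/2) w \<partial>gaussian_product s) - (\<integral>w. smooth_max 0 w \<partial>gaussian_product s)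
      = (\<integral>w. (\<integral>t. smooth_max_dt t w * indicator {0..pi/2} t \<partial>lborel) \<partial>gaussian_product s)"
    using integrable by (simp flip: Bochner_Integration.integral_diff)
  also have "\<dots> = (\<integral>t. (\<integral>w. smooth_max_dt t w * indicator {0..pi/2} t \<partial>gaussian_product s) \<partial>lborel)"
    by (rule Fubini_integral) (use integrable_smooth_max_dt_pair in \<open>simp add: case_prod_beta'\<close>)
  also have "0 \<le> \<dots>"
  proof (rule Bochner_Integration.integral_nonneg)
    fix t
    show "0 \<le> (\<integral>w. smooth_max_dt t w * indicator {0..pi/2} t \<partial>gaussian_product s)"
      using integral_smooth_max_dt_nonneg[of t] by (auto simp: indicator_def)
  qed
  finally show ?thesis by simp
qed

end

lemma gaussian_comparison_log_sum_exp:
  fixes P Q :: "'k \<Rightarrow> 'd::finite \<Rightarrow> real"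
  assumes "0 < s" "0 < b" "finite K" "K \<noteq> {}"
    and "\<And>k l. (\<Sum>a\<in>UNIV. P k a * Q l a) = 0"
    and "\<And>k l. k \<in> K \<Longrightarrow> l \<in> K \<Longrightarrow> (\<Sum>a\<in>UNIV. (P k a - P l a)\<^sup>2) \<le> (\<Sum>a\<in>UNIV. (Q k a - Q l a)\<^sup>2)"
  shows "(\<integral>w. log_sum_exp K b (\<lambda>k. linear_form (P k) w) \<partial>gaussian_product s)
    \<le> (\<integral>w. log_sum_exp K b (\<lambda>k. linear_form (Q k) w) \<partial>gaussian_product s)"
proof -
  interpret gaussian_interpolation s b K P Q
    by unfold_locales (use assms in auto)
  show ?thesis
    using expected_smooth_max_mono unfolding smooth_max_def process_def path_coeff_def by simp
qed

section \<open>Spectral norm and nets\<close>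

lemma spectral_norm_nonneg: "0 \<le> spectral_norm A"
  unfolding spectral_norm_def by (rule onorm_pos_le) simp

lemma spectral_norm_triangle: "spectral_norm (A + B) \<le> spectral_norm A + spectral_norm B"
  unfolding spectral_norm_def matrix_vector_mult_add_rdistrib
  by (rule onorm_triangle) simp_all

lemma norm_matrix_vector_mult_le: "norm (A *v x) \<le> spectral_norm A * norm x"
  unfolding spectral_norm_def by (rule onorm) simp

lemma spectral_norm_le_norm:
  fixes A :: "real^'n^'m"
  shows "spectral_norm A \<le> real CARD('m) * real CARD('n) * norm A"
  unfolding spectral_norm_def
  by (rule onorm_le_matrix_component)
    (meson component_le_norm_cart Finite_Cartesian_Product.norm_nth_le order_trans)

lemma lipschitz_spectral_norm:
  "(real CARD('m) * real CARD('n))-lipschitz_on UNIV (spectral_norm :: real^'n^'m \<Rightarrow> real)"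
proof (rule lipschitz_onI)
  fix A B :: "real^'n^'m"
  have "spectral_norm A \<le> spectral_norm B + spectral_norm (A - B)"
    and "spectral_norm B \<le> spectral_norm A + spectral_norm (B - A)"
    using spectral_norm_triangle[of B "A - B"] spectral_norm_triangle[of A "B - A"] by simp_all
  then show "dist (spectral_norm A) (spectral_norm B) \<le> real CARD('m) * real CARD('n) * dist A B"
    using spectral_norm_le_norm[of "A - B"]
      spectral_norm_le_norm[of "B - A", unfolded norm_minus_commute[of B A]]
    unfolding dist_real_def dist_norm abs_le_iff by (intro conjI) linarith+
qed simp

lemma borel_measurable_spectral_norm_to_matrix:
  "(\<lambda>G. spectral_norm (to_matrix G :: real^'n::finite^'m::finite)) \<in> borel_measurable (gaussian_noise s)"
proof -
  have "continuous_on UNIV (to_matrix :: ('m \<times> 'n \<Rightarrow> real) \<Rightarrow> real^'n^'m)"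
    unfolding to_matrix_def by (intro continuous_on_vec_lambda continuous_on_product_coordinates)
  then have "continuous_on UNIV (\<lambda>G :: 'm \<times> 'n \<Rightarrow> real. spectral_norm (to_matrix G))"
    by (rule continuous_on_compose2[OF lipschitz_on_continuous_on[OF lipschitz_spectral_norm]]) auto
  then have "(\<lambda>G :: 'm \<times> 'n \<Rightarrow> real. spectral_norm (to_matrix G)) \<in> borel_measurable borel"
    by (rule borel_measurable_continuous_onI)
  moreover have "sets (gaussian_noise s :: ('m \<times> 'n \<Rightarrow> real) measure) = sets (PiM UNIV (\<lambda>_. borel))"
    unfolding gaussian_noise_def by (rule sets_PiM_cong) simp_all
  then have "sets (gaussian_noise s :: ('m \<times> 'n \<Rightarrow> real) measure) = sets borel"
    by (simp add: sets_PiM_equal_borel)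
  ultimately show ?thesis
    using measurable_cong_sets[where N=borel] by blast
qed

lemma integrable_spectral_norm_to_matrix:
  assumes s: "0 < s"
  shows "integrable (gaussian_noise s) (\<lambda>G. spectral_norm (to_matrix G :: real^'n::finite^'m::finite))"
proof -
  have "integrable (gaussian_noise s) (\<lambda>G :: 'm \<times> 'n \<Rightarrow> real. \<Sum>i\<in>UNIV. \<Sum>j\<in>UNIV. \<bar>G (i, j)\<bar>)"
    unfolding gaussian_noise_def
    by (intro Bochner_Integration.integrable_sum integrable_gaussian_product_abs_component[OF s])
  moreover have "norm (spectral_norm (to_matrix G)) \<le> norm (\<Sum>i\<in>UNIV. \<Sum>j\<in>UNIV. \<bar>G (i, j)\<bar>)"
    for G :: "'m \<times> 'n \<Rightarrow> real"
    using onorm_le_matrix_component_sum[of "to_matrix G"] spectral_norm_nonneg[of "to_matrix G"]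
    by (simp add: spectral_norm_def to_matrix_def sum_nonneg)
  ultimately show ?thesis
    by (intro Bochner_Integration.integrable_bound[OF _ borel_measurable_spectral_norm_to_matrix] AE_I2)
qed

definition sphere_net :: "real \<Rightarrow> 'a::real_normed_vector set \<Rightarrow> bool" where
  "sphere_net e N \<longleftrightarrow> finite N \<and> N \<subseteq> sphere 0 1 \<and> (\<forall>x\<in>sphere 0 1. \<exists>u\<in>N. norm (x - u) \<le> e)"

lemma sphere_netD:
  assumes "sphere_net e N"
  shows "finite N" and "u \<in> N \<Longrightarrow> norm u = 1" and "norm x = 1 \<Longrightarrow> \<exists>u\<in>N. norm (x - u) \<le> e"
  using assms by (auto simp: sphere_net_def subset_iff)

lemma sphere_net_exists:
  assumes "0 < e"
  shows "\<exists>N :: 'a::euclidean_space set. sphere_net e N"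
proof -
  obtain N where N: "finite N" "N \<subseteq> sphere (0::'a) 1" "sphere 0 1 \<subseteq> (\<Union>x\<in>N. ball x e)"
    using seq_compact_imp_totally_bounded[OF compact_imp_seq_compact[OF compact_sphere[of "0::'a" 1]],
        rule_format, OF assms]
    by blast
  have "\<exists>u\<in>N. norm (x - u) \<le> e" if x: "x \<in> sphere 0 1" for x
  proof -
    obtain u where "u \<in> N" "x \<in> ball u e"
      using N(3) x by blast
    then show ?thesis
      by (intro bexI[of _ u]) (auto simp: dist_norm norm_minus_commute)
  qed
  then have "sphere_net e N"
    using N unfolding sphere_net_def by blast
  then show ?thesis ..
qed

lemma sphere_net_nonempty:
  assumes "sphere_net e (N :: 'a::euclidean_space set)"
  shows "N \<noteq> {}"
proof -
  have "sphere (0::'a) 1 \<noteq> {}"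
    by simp
  then obtain x :: 'a where "x \<in> sphere 0 1"
    by blast
  then show ?thesis
    using assms unfolding sphere_net_def by blast
qed

lemma exists_unit_inner_eq_norm: "\<exists>y :: 'a::euclidean_space. norm y = 1 \<and> y \<bullet> z = norm z"
proof (cases "z = 0")
  case True
  have "sphere (0::'a) 1 \<noteq> {}"
    by simp
  then obtain y :: 'a where "y \<in> sphere 0 1"
    by blast
  with True show ?thesis
    by auto
next
  case False
  then show ?thesis
    by (intro exI[of _ "z /\<^sub>R norm z"]) (simp add: power2_norm_eq_inner[symmetric] power2_eq_square)
qed

text \<open>Choose a unit vector \<open>y\<close> with \<open>y \<bullet> G x = \<parallel>G x\<parallel>\<close> and net points \<open>u \<approx> x\<close>, \<open>v \<approx> y\<close>;
  each of the two approximations costs at most \<open>e \<parallel>G\<parallel>\<close>.\<close>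
lemma norm_matrix_vector_mult_le_net:
  fixes G :: "real^'n^'m"
  assumes Nu: "sphere_net e Nu" and Nv: "sphere_net e Nv" and x: "norm x = 1"
  shows "\<exists>u\<in>Nu. \<exists>v\<in>Nv. norm (G *v x) \<le> v \<bullet> (G *v u) + 2 * e * spectral_norm G"
proof -
  let ?L = "spectral_norm G"
  obtain y :: "real^'m" where y: "norm y = 1" "y \<bullet> (G *v x) = norm (G *v x)"
    using exists_unit_inner_eq_norm by blast
  obtain u where u: "u \<in> Nu" "norm (x - u) \<le> e"
    using sphere_netD(3)[OF Nu x] by blast
  obtain v where v: "v \<in> Nv" "norm (y - v) \<le> e"
    using sphere_netD(3)[OF Nv y(1)] by blast
  have "(y - v) \<bullet> (G *v x) \<le> norm (y - v) * norm (G *v x)"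
    by (rule norm_cauchy_schwarz)
  also have "\<dots> \<le> e * ?L"
    using v(2) norm_matrix_vector_mult_le[of G x] x order_trans[OF norm_ge_zero v(2)]
    by (intro mult_mono) auto
  finally have "(y - v) \<bullet> (G *v x) \<le> e * ?L" .
  moreover have "v \<bullet> (G *v (x - u)) \<le> e * ?L"
  proof -
    have "v \<bullet> (G *v (x - u)) \<le> norm v * norm (G *v (x - u))"
      by (rule norm_cauchy_schwarz)
    also have "\<dots> \<le> ?L * norm (x - u)"
      using sphere_netD(2)[OF Nv v(1)] norm_matrix_vector_mult_le[of G "x - u"] by simp
    also have "\<dots> \<le> ?L * e"
      using u(2) spectral_norm_nonneg[of G] by (rule mult_left_mono)
    finally show ?thesis by (simp add: mult.commute)
  qed
  moreover have "norm (G *v x) = v \<bullet> (G *v u) + (y - v) \<bullet> (G *v x) + v \<bullet> (G *v (x - u))"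
    using y by (simp add: matrix_vector_mult_diff_distrib inner_diff_left inner_diff_right)
  ultimately have "norm (G *v x) \<le> v \<bullet> (G *v u) + 2 * e * ?L"
    by linarith
  with u v show ?thesis
    by blast
qed

lemma spectral_norm_le_net_max:
  fixes G :: "real^'n^'m"
  assumes Nu: "sphere_net e Nu" and Nv: "sphere_net e Nv"
  shows "\<exists>(u, v)\<in>Nu \<times> Nv. (1 - 2 * e) * spectral_norm G \<le> v \<bullet> (G *v u)"
proof -
  let ?L = "spectral_norm G"
  let ?f = "\<lambda>(u, v). v \<bullet> (G *v u)"
  have fin: "finite (?f ` (Nu \<times> Nv))" "?f ` (Nu \<times> Nv) \<noteq> {}"
    using sphere_netD(1)[OF Nu] sphere_netD(1)[OF Nv]
      sphere_net_nonempty[OF Nu] sphere_net_nonempty[OF Nv]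
    by auto
  define M where "M = Max (?f ` (Nu \<times> Nv))"
  have "norm (G *v x) \<le> (M + 2 * e * ?L) * norm x" for x
  proof (cases "x = 0")
    case False
    then obtain u v where "u \<in> Nu" "v \<in> Nv"
      and "norm (G *v ((1 / norm x) *\<^sub>R x)) \<le> v \<bullet> (G *v u) + 2 * e * ?L"
      using norm_matrix_vector_mult_le_net[OF Nu Nv, of "(1 / norm x) *\<^sub>R x" G] by auto
    moreover have "v \<bullet> (G *v u) \<le> M"
      if "u \<in> Nu" "v \<in> Nv" for u v
      unfolding M_def using fin that by (intro Max_ge) auto
    ultimately have "norm (G *v x) / norm x \<le> M + 2 * e * ?L"
      by (force simp: matrix_vector_mult_scaleR)
    then show ?thesis
      using False by (simp add: divide_le_eq mult.commute)
  qed simp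
  then have "?L \<le> M + 2 * e * ?L"
    unfolding spectral_norm_def[of G] by (rule onorm_le)
  moreover obtain k where "k \<in> Nu \<times> Nv" "?f k = M"
    unfolding M_def using Max_in[OF fin] by auto
  ultimately show ?thesis
    by (intro bexI[of _ k]) (auto simp: algebra_simps)
qed

section \<open>Gordon's inequality\<close>

text \<open>The index type carries the entries of the Gaussian matrix \<open>G\<close> together with independent
  Gaussian vectors \<open>g \<in> \<real>\<^sup>n\<close> and \<open>h \<in> \<real>\<^sup>m\<close>. Indexed by pairs \<open>(u, v)\<close> of unit vectors,
  \<open>gordon_P\<close> encodes the process \<open>\<langle>v, G u\<rangle>\<close> and \<open>gordon_Q\<close> the process \<open>\<langle>g, u\<rangle> + \<langle>h, v\<rangle>\<close>.\<close>

type_synonym ('m, 'n) gordon_index = "('m \<times> 'n) + ('n + 'm)"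

definition gordon_P :: "(real^'n) \<times> (real^'m) \<Rightarrow> ('m::finite, 'n::finite) gordon_index \<Rightarrow> real" where
  "gordon_P k a = (case a of Inl (i, j) \<Rightarrow> snd k $ i * fst k $ j | Inr _ \<Rightarrow> 0)"

definition gordon_Q :: "(real^'n) \<times> (real^'m) \<Rightarrow> ('m::finite, 'n::finite) gordon_index \<Rightarrow> real" where
  "gordon_Q k a = (case a of Inl _ \<Rightarrow> 0 | Inr (Inl j) \<Rightarrow> fst k $ j | Inr (Inr i) \<Rightarrow> snd k $ i)"

definition bilinear_coeff :: "(real^'n) \<times> (real^'m) \<Rightarrow> 'm::finite \<times> 'n::finite \<Rightarrow> real" where
  "bilinear_coeff k = (\<lambda>(i, j). snd k $ i * fst k $ j)"

lemma sum_gordon_index: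
  fixes f :: "('m::finite, 'n::finite) gordon_index \<Rightarrow> real"
  shows "(\<Sum>a\<in>UNIV. f a) = (\<Sum>i\<in>UNIV. \<Sum>j\<in>UNIV. f (Inl (i, j)))
    + (\<Sum>j\<in>UNIV. f (Inr (Inl j))) + (\<Sum>i\<in>UNIV. f (Inr (Inr i)))"
proof -
  have "(\<Sum>a\<in>UNIV. f a) = (\<Sum>x\<in>UNIV. f (Inl x)) + (\<Sum>y\<in>UNIV. f (Inr y))"
    using sum.Plus[of "UNIV :: ('m \<times> 'n) set" "UNIV :: ('n + 'm) set" f]
    by (simp add: UNIV_Plus_UNIV comp_def)
  moreover have "(\<Sum>y\<in>UNIV. f (Inr y)) = (\<Sum>j\<in>UNIV. f (Inr (Inl j))) + (\<Sum>i\<in>UNIV. f (Inr (Inr i)))"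
    using sum.Plus[of "UNIV :: 'n set" "UNIV :: 'm set" "\<lambda>y. f (Inr y)"]
    by (simp add: UNIV_Plus_UNIV comp_def)
  moreover have "(\<Sum>x\<in>UNIV. f (Inl x)) = (\<Sum>i\<in>UNIV. \<Sum>j\<in>UNIV. f (Inl (i, j)))"
    by (simp add: sum.cartesian_product UNIV_Times_UNIV[symmetric] del: UNIV_Times_UNIV)
  ultimately show ?thesis by simp
qed

lemma sum_gordon_P_mult: "(\<Sum>a\<in>UNIV. gordon_P k a * gordon_P l a) = (snd k \<bullet> snd l) * (fst k \<bullet> fst l)"
  unfolding sum_gordon_index gordon_P_def inner_vec_def
  by (simp add: sum_distrib_left sum_distrib_right mult_ac) (rule sum.swap)

lemma sum_gordon_Q_mult: "(\<Sum>a\<in>UNIV. gordon_Q k a * gordon_Q l a) = (fst k \<bullet> fst l) + (snd k \<bullet> snd l)"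
  unfolding sum_gordon_index gordon_Q_def inner_vec_def by simp

lemma sum_gordon_P_Q_mult: "(\<Sum>a\<in>UNIV. gordon_P k a * gordon_Q l a) = 0"
  unfolding sum_gordon_index gordon_P_def gordon_Q_def by simp

text \<open>The increment inequality reduces to \<open>(1 - \<langle>u, u'\<rangle>) (1 - \<langle>v, v'\<rangle>) \<ge> 0\<close>.\<close>
lemma gordon_increments:
  assumes "norm (fst k) = 1" "norm (snd k) = 1" "norm (fst l) = 1" "norm (snd l) = 1"
  shows "(\<Sum>a\<in>UNIV. (gordon_P k a - gordon_P l a)\<^sup>2) \<le> (\<Sum>a\<in>UNIV. (gordon_Q k a - gordon_Q l a)\<^sup>2)"
proof -
  define x where "x = fst k \<bullet> fst l"
  define y where "y = snd k \<bullet> snd l"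
  have unit: "fst k \<bullet> fst k = 1" "snd k \<bullet> snd k = 1" "fst l \<bullet> fst l = 1" "snd l \<bullet> snd l = 1"
    using assms by (simp_all add: dot_square_norm)
  have "x \<le> 1" "y \<le> 1"
    unfolding x_def y_def
    using norm_cauchy_schwarz[of "fst k" "fst l"] norm_cauchy_schwarz[of "snd k" "snd l"] assms
    by simp_all
  then have "0 \<le> (1 - x) * (1 - y)"
    by (intro mult_nonneg_nonneg) auto
  then show ?thesis
    unfolding sum_square_diff sum_gordon_P_mult sum_gordon_Q_mult unit
    by (simp add: inner_commute[of "snd l"] inner_commute[of "fst l"] x_def[symmetric] y_def[symmetric]
        algebra_simps)
qed

lemma linear_form_gordon_P:
  "linear_form (gordon_P k) w = linear_form (bilinear_coeff k) (\<lambda>x. w (Inl x))"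
  unfolding linear_form_def sum_gordon_index gordon_P_def bilinear_coeff_def
  by (simp add: sum.cartesian_product UNIV_Times_UNIV[symmetric] del: UNIV_Times_UNIV)
    (rule sum.cong; auto)

lemma linear_form_bilinear_coeff: "linear_form (bilinear_coeff k) G = snd k \<bullet> (to_matrix G *v fst k)"
  unfolding linear_form_def bilinear_coeff_def to_matrix_def inner_vec_def matrix_vector_mult_def
  by (simp add: sum.cartesian_product UNIV_Times_UNIV[symmetric] sum_distrib_left mult_ac
      del: UNIV_Times_UNIV)
    (rule sum.cong; auto)

lemma linear_form_gordon_Q:
  "linear_form (gordon_Q k) w = fst k \<bullet> (\<chi> j. w (Inr (Inl j))) + snd k \<bullet> (\<chi> i. w (Inr (Inr i)))"
  unfolding linear_form_def sum_gordon_index gordon_Q_def inner_vec_def by simp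

lemma norm_le_amgm:
  fixes x :: "'a::real_inner"
  assumes "0 < t"
  shows "norm x \<le> ((x \<bullet> x) / t + t) / 2"
proof -
  have "0 \<le> (norm x - t)\<^sup>2" by simp
  then have "2 * t * norm x \<le> (norm x)\<^sup>2 + t\<^sup>2"
    by (simp add: power2_eq_square algebra_simps)
  then show ?thesis
    using assms by (simp add: dot_square_norm field_simps power2_eq_square)
qed

text \<open>An integrable majorant of the norm of a Gaussian vector \<open>g \<in> \<real>\<^sup>n\<close>: AM-GM with
  \<open>t = s \<surd>n\<close> gives \<open>\<parallel>g\<parallel> \<le> (\<parallel>g\<parallel>\<^sup>2 / t + t) / 2\<close>, whose expectation is \<open>s \<surd>n\<close>; this replaces
  Jensen's inequality \<open>E \<parallel>g\<parallel> \<le> (E \<parallel>g\<parallel>\<^sup>2)\<^sup>1\<^sup>/\<^sup>2\<close>.\<close>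
definition norm_majorant :: "real \<Rightarrow> ('j::finite \<Rightarrow> 'd) \<Rightarrow> ('d \<Rightarrow> real) \<Rightarrow> real" where
  "norm_majorant s f w = ((\<Sum>j\<in>UNIV. (w (f j))\<^sup>2) / (s * sqrt CARD('j)) + s * sqrt CARD('j)) / 2"

lemma norm_le_norm_majorant:
  fixes f :: "'j::finite \<Rightarrow> 'd"
  shows "0 < s \<Longrightarrow> norm (\<chi> j. w (f j)) \<le> norm_majorant s f w"
  using norm_le_amgm[of "s * sqrt CARD('j)" "\<chi> j. w (f j)"]
  by (simp add: norm_majorant_def inner_vec_def power2_eq_square)

lemma integrable_norm_majorant:
  fixes f :: "'j::finite \<Rightarrow> 'd::finite"
  assumes s: "0 < s"
  shows "integrable (gaussian_product s) (norm_majorant s f)"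
proof -
  interpret prob_space "gaussian_product s :: ('d \<Rightarrow> real) measure"
    by (rule prob_space_gaussian_product[OF s])
  show ?thesis
    unfolding norm_majorant_def
    using integrable_gaussian_product_component[OF s integrable_normal_measure_square[OF s]]
    by (intro Bochner_Integration.integrable_add integrable_divide Bochner_Integration.integrable_sum
        integrable_const) auto
qed

lemma integral_norm_majorant:
  fixes f :: "'j::finite \<Rightarrow> 'd::finite"
  assumes s: "0 < s"
  shows "(\<integral>w. norm_majorant s f w \<partial>gaussian_product s) = s * sqrt CARD('j)"
proof -
  interpret prob_space "gaussian_product s :: ('d \<Rightarrow> real) measure"
    by (rule prob_space_gaussian_product[OF s])
  let ?t = "s * sqrt CARD('j)"
  have "integrable (gaussian_product s :: ('d \<Rightarrow> real) measure) (\<lambda>w. (\<Sum>j\<in>UNIV. (w (f j))\<^sup>2))"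
    using integrable_gaussian_product_component[OF s integrable_normal_measure_square[OF s]]
    by (intro Bochner_Integration.integrable_sum) auto
  then have "(\<integral>w. norm_majorant s f w \<partial>gaussian_product s) = (real CARD('j) * s\<^sup>2 / ?t + ?t) / 2"
    unfolding norm_majorant_def by (simp add: integral_gaussian_product_sum_squares[OF s] prob_space)
  also have "real CARD('j) * s\<^sup>2 = ?t\<^sup>2"
    by (simp add: power_mult_distrib)
  also have "(?t\<^sup>2 / ?t + ?t) / 2 = ?t"
    using s by (simp add: power2_eq_square)
  finally show ?thesis .
qed

lemma expected_log_sum_exp_gordon_Q_le:
  fixes Nu :: "(real^'n::finite) set" and Nv :: "(real^'m::finite) set"
  assumes s: "0 < s" and b: "0 < b" and K: "finite (Nu \<times> Nv)" "Nu \<times> Nv \<noteq> {}"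
    and unit: "\<And>u v. (u, v) \<in> Nu \<times> Nv \<Longrightarrow> norm u = 1 \<and> norm v = 1"
  shows "(\<integral>w. log_sum_exp (Nu \<times> Nv) b (\<lambda>k. linear_form (gordon_Q k) w)
      \<partial>(gaussian_product s :: (('m, 'n) gordon_index \<Rightarrow> real) measure))
    \<le> ln (card (Nu \<times> Nv)) + b * ((sqrt CARD('n) + sqrt CARD('m)) * s)"
proof -
  let ?M = "gaussian_product s :: (('m, 'n) gordon_index \<Rightarrow> real) measure"
  let ?g = "\<lambda>j :: 'n. Inr (Inl j) :: ('m, 'n) gordon_index"
  let ?h = "\<lambda>i :: 'm. Inr (Inr i) :: ('m, 'n) gordon_index"
  let ?R = "\<lambda>w. ln (card (Nu \<times> Nv)) + b * (norm_majorant s ?g w + norm_majorant s ?h w)"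
  interpret prob_space ?M
    by (rule prob_space_gaussian_product[OF s])
  have bound: "log_sum_exp (Nu \<times> Nv) b (\<lambda>k. linear_form (gordon_Q k) w) \<le> ?R w" for w
  proof -
    have "log_sum_exp (Nu \<times> Nv) b (\<lambda>k. linear_form (gordon_Q k) w)
        \<le> ln (card (Nu \<times> Nv)) + b * (norm (\<chi> j. w (?g j)) + norm (\<chi> i. w (?h i)))"
    proof (rule log_sum_exp_le[OF K])
      fix k
      assume "k \<in> Nu \<times> Nv"
      then show "linear_form (gordon_Q k) w \<le> norm (\<chi> j. w (?g j)) + norm (\<chi> i. w (?h i))"
        using unit[of "fst k" "snd k"] norm_cauchy_schwarz[of "fst k" "\<chi> j. w (?g j)"]
          norm_cauchy_schwarz[of "snd k" "\<chi> i. w (?h i)"]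
        unfolding linear_form_gordon_Q by auto
    qed (use b in simp)
    also have "\<dots> \<le> ?R w"
      using norm_le_norm_majorant[OF s, of w ?g] norm_le_norm_majorant[OF s, of w ?h] b
      by (intro add_left_mono mult_left_mono add_mono) auto
    finally show ?thesis .
  qed
  have "(\<integral>w. log_sum_exp (Nu \<times> Nv) b (\<lambda>k. linear_form (gordon_Q k) w) \<partial>?M) \<le> (\<integral>w. ?R w \<partial>?M)"
    using b
    by (intro integral_mono bound integrable_log_sum_exp[OF s _ K] Bochner_Integration.integrable_add
        integrable_const integrable_mult_right integrable_norm_majorant[OF s]) auto
  also have "(\<integral>w. ?R w \<partial>?M) = ln (card (Nu \<times> Nv)) + b * ((sqrt CARD('n) + sqrt CARD('m)) * s)"
    using integrable_norm_majorant[OF s, of ?g] integrable_norm_majorant[OF s, of ?h]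
    by (simp add: integral_norm_majorant[OF s] prob_space algebra_simps)
  finally show ?thesis .
qed

lemma integral_gaussian_product_Inl:
  fixes f :: "('m::finite \<times> 'n::finite \<Rightarrow> real) \<Rightarrow> real"
  assumes s: "0 < s" and f: "f \<in> borel_measurable (gaussian_product s :: ('m \<times> 'n \<Rightarrow> real) measure)"
  shows "(\<integral>w. f (\<lambda>x. w (Inl x)) \<partial>(gaussian_product s :: (('m, 'n) gordon_index \<Rightarrow> real) measure))
    = (\<integral>G. f G \<partial>gaussian_product s)"
proof -
  let ?M = "gaussian_product s :: (('m, 'n) gordon_index \<Rightarrow> real) measure"
  let ?G = "gaussian_product s :: ('m \<times> 'n \<Rightarrow> real) measure"
  have distr: "distr ?M ?G (\<lambda>w. \<lambda>x\<in>UNIV. w (Inl x)) = ?G"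
    by (rule distr_PiM_reindex[of UNIV "\<lambda>_. normal_measure s"])
      (auto intro: prob_space_normal_measure[OF s])
  have "(\<lambda>w. \<lambda>x\<in>UNIV. w (Inl x)) \<in> measurable ?M ?G"
    by measurable
  then have "(\<integral>w. f (\<lambda>x\<in>UNIV. w (Inl x)) \<partial>?M) = (\<integral>G. f G \<partial>distr ?M ?G (\<lambda>w. \<lambda>x\<in>UNIV. w (Inl x)))"
    by (rule integral_distr[symmetric, OF _ f])
  also have "\<dots> = (\<integral>G. f G \<partial>?G)"
    unfolding distr ..
  finally show ?thesis
    by (simp add: restrict_def)
qed

lemma expected_log_sum_exp_bilinear_le:
  fixes Nu :: "(real^'n::finite) set" and Nv :: "(real^'m::finite) set"
  assumes s: "0 < s" and b: "0 < b" and K: "finite (Nu \<times> Nv)" "Nu \<times> Nv \<noteq> {}"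
    and unit: "\<And>u v. (u, v) \<in> Nu \<times> Nv \<Longrightarrow> norm u = 1 \<and> norm v = 1"
  shows "(\<integral>G. log_sum_exp (Nu \<times> Nv) b (\<lambda>k. linear_form (bilinear_coeff k) G) \<partial>gaussian_noise s)
    \<le> ln (card (Nu \<times> Nv)) + b * ((sqrt CARD('n) + sqrt CARD('m)) * s)"
proof -
  let ?M = "gaussian_product s :: (('m, 'n) gordon_index \<Rightarrow> real) measure"
  have "(\<integral>G. log_sum_exp (Nu \<times> Nv) b (\<lambda>k. linear_form (bilinear_coeff k) G) \<partial>gaussian_noise s)
      = (\<integral>w. log_sum_exp (Nu \<times> Nv) b (\<lambda>k. linear_form (gordon_P k) w) \<partial>?M)"
    unfolding linear_form_gordon_P gaussian_noise_def
    by (rule integral_gaussian_product_Inl[OF s, symmetric]) (unfold log_sum_exp_def, measurable)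
  also have "\<dots> \<le> (\<integral>w. log_sum_exp (Nu \<times> Nv) b (\<lambda>k. linear_form (gordon_Q k) w) \<partial>?M)"
    using unit
    by (intro gaussian_comparison_log_sum_exp[OF s b K] sum_gordon_P_Q_mult gordon_increments) auto
  also have "\<dots> \<le> ln (card (Nu \<times> Nv)) + b * ((sqrt CARD('n) + sqrt CARD('m)) * s)"
    by (rule expected_log_sum_exp_gordon_Q_le[OF s b K unit])
  finally show ?thesis .
qed

lemma spectral_norm_le_log_sum_exp:
  assumes b: "0 < b" and Nu: "sphere_net e Nu" and Nv: "sphere_net e Nv"
  shows "(1 - 2 * e) * b * spectral_norm (to_matrix G)
    \<le> log_sum_exp (Nu \<times> Nv) b (\<lambda>k. linear_form (bilinear_coeff k) G)"
proof -
  obtain k where k: "k \<in> Nu \<times> Nv"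
    "(1 - 2 * e) * spectral_norm (to_matrix G) \<le> snd k \<bullet> (to_matrix G *v fst k)"
    using spectral_norm_le_net_max[OF Nu Nv, of "to_matrix G"] by auto
  have "(1 - 2 * e) * b * spectral_norm (to_matrix G) \<le> b * linear_form (bilinear_coeff k) G"
    using k(2) b unfolding linear_form_bilinear_coeff by (simp add: mult_ac mult_left_mono)
  also have "\<dots> \<le> log_sum_exp (Nu \<times> Nv) b (\<lambda>k. linear_form (bilinear_coeff k) G)"
    using sphere_netD(1)[OF Nu] sphere_netD(1)[OF Nv] k(1)
    by (intro mult_le_log_sum_exp[where x="\<lambda>k. linear_form (bilinear_coeff k) G"]) auto
  finally show ?thesis .
qed

lemma le_of_forall_pos_mult_le_add:
  fixes x y L :: real
  assumes "\<And>b. 0 < b \<Longrightarrow> b * x \<le> L + b * y"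
  shows "x \<le> y"
proof (rule ccontr)
  assume "\<not> x \<le> y"
  then have "0 < x - y"
    by simp
  define b where "b = (\<bar>L\<bar> + 1) / (x - y)"
  have "0 < b"
    using \<open>0 < x - y\<close> by (simp add: b_def add_pos_nonneg)
  have "b * (x - y) = \<bar>L\<bar> + 1"
    using \<open>0 < x - y\<close> by (simp add: b_def)
  then have "b * x - b * y = \<bar>L\<bar> + 1"
    by (simp add: right_diff_distrib)
  then show False
    using assms[OF \<open>0 < b\<close>] abs_ge_self[of L] by linarith
qed

lemma expected_spectral_norm_le_net_bound:
  assumes s: "0 < s" and e: "0 < e"
  shows "(1 - 2 * e) * (\<integral>G. spectral_norm (to_matrix G :: real^'n::finite^'m::finite) \<partial>gaussian_noise s)
    \<le> (sqrt CARD('n) + sqrt CARD('m)) * s"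
proof -
  let ?M = "gaussian_noise s :: ('m \<times> 'n \<Rightarrow> real) measure"
  obtain Nu :: "(real^'n) set" where Nu: "sphere_net e Nu"
    using sphere_net_exists[OF e] by blast
  obtain Nv :: "(real^'m) set" where Nv: "sphere_net e Nv"
    using sphere_net_exists[OF e] by blast
  have K: "finite (Nu \<times> Nv)" "Nu \<times> Nv \<noteq> {}"
    using sphere_netD(1)[OF Nu] sphere_netD(1)[OF Nv]
      sphere_net_nonempty[OF Nu] sphere_net_nonempty[OF Nv]
    by auto
  have unit: "norm u = 1 \<and> norm v = 1" if "(u, v) \<in> Nu \<times> Nv" for u v
    using sphere_netD(2)[OF Nu] sphere_netD(2)[OF Nv] that by auto
  show ?thesis
  proof (rule le_of_forall_pos_mult_le_add)
    fix b :: real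
    assume b: "0 < b"
    have "b * ((1 - 2 * e) * (\<integral>G. spectral_norm (to_matrix G) \<partial>?M))
        = (\<integral>G. (1 - 2 * e) * b * spectral_norm (to_matrix G) \<partial>?M)"
      by (simp add: mult_ac)
    also have "\<dots> \<le> (\<integral>G. log_sum_exp (Nu \<times> Nv) b (\<lambda>k. linear_form (bilinear_coeff k) G) \<partial>?M)"
      using integrable_spectral_norm_to_matrix[OF s] b
        integrable_log_sum_exp[OF s _ K, of b bilinear_coeff, folded gaussian_noise_def]
      by (intro integral_mono spectral_norm_le_log_sum_exp[OF b Nu Nv]) auto
    also have "\<dots> \<le> ln (card (Nu \<times> Nv)) + b * ((sqrt CARD('n) + sqrt CARD('m)) * s)"
      by (rule expected_log_sum_exp_bilinear_le[OF s b K unit])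
    finally show "b * ((1 - 2 * e) * (\<integral>G. spectral_norm (to_matrix G) \<partial>?M))
      \<le> ln (card (Nu \<times> Nv)) + b * ((sqrt CARD('n) + sqrt CARD('m)) * s)" .
  qed
qed

theorem gordon_expected_spectral_norm:
  assumes s: "0 < s"
  shows "(\<integral>G. spectral_norm (to_matrix G :: real^'n::finite^'m::finite) \<partial>gaussian_noise s)
    \<le> (sqrt CARD('n) + sqrt CARD('m)) * s" (is "?E \<le> ?c")
proof (rule tendsto_upperbound)
  show "((\<lambda>e. (1 - 2 * e) * ?E) \<longlongrightarrow> ?E) (at_right 0)"
    by (auto intro!: tendsto_eq_intros)
  show "\<forall>\<^sub>F e in at_right 0. (1 - 2 * e) * ?E \<le> ?c"
    using eventually_at_right_less[of "0::real"]
    by eventually_elim (rule expected_spectral_norm_le_net_bound[OF s])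
qed simp

lemma ln_le_tangent:
  fixes y z :: real
  assumes "0 < y" "0 < z"
  shows "ln y \<le> ln z + (y - z) / z"
  using ln_le_minus_one[of "y / z"] assms by (simp add: ln_div diff_divide_distrib)

text \<open>Jensen's inequality for the concave function \<open>ln (x + 4)\<close>, via its tangent at \<open>c\<close>.\<close>
lemma nn_integral_ln_add_4_le:
  assumes "prob_space M" and int: "integrable M f" and nonneg: "\<And>x. 0 \<le> f x"
    and mean: "(\<integral>x. f x \<partial>M) \<le> c"
  shows "(\<integral>\<^sup>+ x. ennreal (ln (f x + 4)) \<partial>M) \<le> ennreal (ln (c + 4))"
proof -
  interpret prob_space M by fact
  let ?tangent = "\<lambda>x. ln (c + 4) + (f x - c) / (c + 4)"
  have "0 \<le> c"
    using mean integral_nonneg_AE[of f M] nonneg by (meson AE_I2 order_trans)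
  have tangent: "ln (f x + 4) \<le> ?tangent x" for x
    using ln_le_tangent[of "f x + 4" "c + 4"] nonneg[of x] \<open>0 \<le> c\<close> by simp
  have "0 \<le> ln (f x + 4)" for x
    using nonneg[of x] by simp
  then have "(\<integral>\<^sup>+ x. ennreal (?tangent x) \<partial>M) = ennreal (\<integral>x. ?tangent x \<partial>M)"
    using tangent order_trans
    by (intro nn_integral_eq_integral AE_I2 Bochner_Integration.integrable_add
        Bochner_Integration.integrable_diff integrable_divide integrable_const int) blast+
  also have "(\<integral>x. ?tangent x \<partial>M) = ln (c + 4) + ((\<integral>x. f x \<partial>M) - c) / (c + 4)"
    using int by (simp add: prob_space)
  also have "\<dots> \<le> ln (c + 4)"
    using mean \<open>0 \<le> c\<close> by (simp add: divide_nonpos_pos)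
  finally have "(\<integral>\<^sup>+ x. ennreal (?tangent x) \<partial>M) \<le> ennreal (ln (c + 4))"
    by (simp add: ennreal_leI)
  moreover have "(\<integral>\<^sup>+ x. ennreal (ln (f x + 4)) \<partial>M) \<le> (\<integral>\<^sup>+ x. ennreal (?tangent x) \<partial>M)"
    by (intro nn_integral_mono ennreal_leI tangent)
  ultimately show ?thesis
    by (rule order_trans[rotated])
qed

theorem mainTheorem10:
  fixes Abar :: "real^'n::finite^'m::finite" and \<sigma> :: real
  assumes "spectral_norm Abar \<le> 1"
    and "0 < \<sigma>" and "\<sigma>\<^sup>2 \<le> 1"
  shows "(\<integral>\<^sup>+ g. ennreal (ln (spectral_norm (Abar + to_matrix g) + 3))
            \<partial>(gaussian_noise \<sigma> :: ('m \<times> 'n \<Rightarrow> real) measure))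
         \<le> ennreal (ln ((sqrt (real CARD('n)) + sqrt (real CARD('m))) * \<sigma> + 4))"
proof -
  have "ln (spectral_norm (Abar + to_matrix g) + 3) \<le> ln (spectral_norm (to_matrix g) + 4)" for g
    using spectral_norm_triangle[of Abar "to_matrix g"] spectral_norm_nonneg[of "Abar + to_matrix g"]
      assms(1)
    by simp
  then have "(\<integral>\<^sup>+ g. ennreal (ln (spectral_norm (Abar + to_matrix g) + 3)) \<partial>gaussian_noise \<sigma>)
      \<le> (\<integral>\<^sup>+ g. ennreal (ln (spectral_norm (to_matrix g :: real^'n^'m) + 4)) \<partial>gaussian_noise \<sigma>)"
    by (intro nn_integral_mono ennreal_leI)
  also have "\<dots> \<le> ennreal (ln ((sqrt (real CARD('n)) + sqrt (real CARD('m))) * \<sigma> + 4))"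
    using assms(2) spectral_norm_nonneg prob_space_gaussian_product[OF assms(2)]
    by (intro nn_integral_ln_add_4_le integrable_spectral_norm_to_matrix gordon_expected_spectral_norm)
      (simp_all add: gaussian_noise_def)
  finally show ?thesis .
qed

end
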